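(* Let $G$ be a regular subsequential method of sequential convergence, and let $f:\mathbb{R}\to\mathbb{R}$ be Abel continuous. Then $f$ is $G$-continuous.
   Context: Let $s$ denote the space of all real sequences and $c$ the space of convergent real sequences. A method of sequential convergence is a linear function $G$ defined on a linear subspace $c_G$ of $s$ with values in $\mathbb{R}$; a sequence $\mathbf{p}$ is $G$-convergent to $\ell$ if $\mathbf{p}\in c_G$ and $G(\mathbf{p})=\ell$. $G$ is regular if every convergent sequence $\mathbf{p}$ belongs to $c_G$ and $G(\mathbf{p})=\lim\mathbf{p}$. $G$ is subsequential if whenever $G(\mathbf{p})=\ell$ there is a subsequence $(p_{n_k})$ of $\mathbf{p}$ with $\lim_k p_{n_k}=\ell$. $f$ is $G$-continuous if for every $G$-convergent sequence $\mathbf{p}=(p_n)$, the sequence $f(\mathbf{p})=(f(p_n))$ is $G$-convergent and $G(f(\mathbf{p}))=f(G(\mathbf{p}))$. A sequence $(p_n)$ is Abel convergent to $\ell$ if $\sum_{k=0}^{\infty}p_k x^k$ converges for every $0\le x<1$ and $\lim_{x\to1^-}(1-x)\sum_{k=0}^\infty p_kx^k=\ell$; $f$ is Abel continuous if $(f(p_n))$ is Abel convergent to $f(\ell)$ whenever $(p_n)$ is Abel convergent to $\ell$. *)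

theory Defs
  imports "HOL-Analysis.Analysis"
begin

text \<open>A method of sequential convergence: a linear functional G defined on a
linear subspace cG of the space of all real sequences (nat \<Rightarrow> real).
The values of G outside cG are irrelevant.\<close>

definition seq_method :: "(nat \<Rightarrow> real) set \<Rightarrow> ((nat \<Rightarrow> real) \<Rightarrow> real) \<Rightarrow> bool" where
  "seq_method cG G \<longleftrightarrow>
     (\<lambda>n. 0) \<in> cG \<and>
     (\<forall>p\<in>cG. \<forall>q\<in>cG. (\<lambda>n. p n + q n) \<in> cG) \<and>
     (\<forall>p\<in>cG. \<forall>c::real. (\<lambda>n. c * p n) \<in> cG) \<and>
     (\<forall>p\<in>cG. \<forall>q\<in>cG. G (\<lambda>n. p n + q n) = G p + G q) \<and>
     (\<forall>p\<in>cG. \<forall>c::real. G (\<lambda>n. c * p n) = c * G p)"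

definition regular_method :: "(nat \<Rightarrow> real) set \<Rightarrow> ((nat \<Rightarrow> real) \<Rightarrow> real) \<Rightarrow> bool" where
  "regular_method cG G \<longleftrightarrow> (\<forall>p. convergent p \<longrightarrow> p \<in> cG \<and> G p = lim p)"

definition subsequential_method :: "(nat \<Rightarrow> real) set \<Rightarrow> ((nat \<Rightarrow> real) \<Rightarrow> real) \<Rightarrow> bool" where
  "subsequential_method cG G \<longleftrightarrow>
     (\<forall>p\<in>cG. \<exists>r. strict_mono r \<and> (\<lambda>k. p (r k)) \<longlonglongrightarrow> G p)"

definition G_continuous :: "(nat \<Rightarrow> real) set \<Rightarrow> ((nat \<Rightarrow> real) \<Rightarrow> real) \<Rightarrow> (real \<Rightarrow> real) \<Rightarrow> bool" where
  "G_continuous cG G f \<longleftrightarrow>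
     (\<forall>p\<in>cG. (\<lambda>n. f (p n)) \<in> cG \<and> G (\<lambda>n. f (p n)) = f (G p))"

definition abel_convergent :: "(nat \<Rightarrow> real) \<Rightarrow> real \<Rightarrow> bool" where
  "abel_convergent p l \<longleftrightarrow>
     (\<forall>x::real. 0 \<le> x \<and> x < 1 \<longrightarrow> summable (\<lambda>k. p k * x ^ k)) \<and>
     ((\<lambda>x. (1 - x) * (\<Sum>k. p k * x ^ k)) \<longlongrightarrow> l) (at_left 1)"

definition abel_continuous :: "(real \<Rightarrow> real) \<Rightarrow> bool" where
  "abel_continuous f \<longleftrightarrow>
     (\<forall>p l. abel_convergent p l \<longrightarrow> abel_convergent (\<lambda>n. f (p n)) (f l))"

end

theory Submission
  imports Defs
begin

text \<open>
  Abel summation is regular, and it sums the two-valued sequence a, b, a, b, \<dots> to the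
  average (a + b)/2. Applying an Abel continuous f to such a sequence therefore gives
  f((a + b)/2) = (f a + f b)/2, i.e. f satisfies Jensen's equation. Regularity also forbids
  f from mapping a sequence converging to l onto a sequence converging to anything but f l;
  together with Jensen's equation, which lets one rescale any jump of f towards l, this makes
  f continuous. A continuous solution of Jensen's equation is affine, and affine maps are
  G-continuous for every regular linear method G.
\<close>

lemma abel_convergent_unique:
  assumes "abel_convergent p l" and "abel_convergent p m"
  shows "l = m"
  using assms tendsto_unique trivial_limit_at_left_real unfolding abel_convergent_def by blast

lemma abel_mean_abs_le:
  fixes e :: "nat \<Rightarrow> real"
  assumes head: "\<And>k. k < N \<Longrightarrow> \<bar>e k\<bar> \<le> B" and tail: "\<And>k. N \<le> k \<Longrightarrow> \<bar>e k\<bar> \<le> \<epsilon>"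
    and x: "0 \<le> x" "x < 1"
  shows "summable (\<lambda>k. e k * x ^ k)"
    and "\<bar>(1 - x) * (\<Sum>k. e k * x ^ k)\<bar> \<le> (1 - x) * (B * N) + \<epsilon>"
proof -
  define g where "g k = (if k \<in> {..<N} then B else 0) + \<epsilon> * x ^ k" for k
  have g_sums: "g sums (B * N + \<epsilon> * (1 / (1 - x)))"
    unfolding g_def using sums_If_finite_set[of "{..<N}" "\<lambda>_. B"] x
    by (intro sums_add sums_mult geometric_sums) (auto simp: mult.commute)
  have "\<epsilon> \<ge> 0" using tail[of N] by linarith
  have le_g: "\<bar>e k * x ^ k\<bar> \<le> g k" for k
  proof -
    have abs_eq: "\<bar>e k * x ^ k\<bar> = \<bar>e k\<bar> * x ^ k" using x by (simp add: abs_mult)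
    show ?thesis
    proof (cases "k < N")
      case True
      have "\<bar>e k\<bar> * x ^ k \<le> B * 1"
        using head[OF True] x by (intro mult_mono) (auto intro: power_le_one)
      moreover have "0 \<le> \<epsilon> * x ^ k" using \<open>\<epsilon> \<ge> 0\<close> x by simp
      ultimately show ?thesis using True by (simp add: g_def abs_eq)
    next
      case False
      have "\<bar>e k\<bar> * x ^ k \<le> \<epsilon> * x ^ k"
        using tail[of k] False x by (intro mult_right_mono) auto
      then show ?thesis using False by (simp add: g_def abs_eq)
    qed
  qed
  have abs_summable: "summable (\<lambda>k. \<bar>e k * x ^ k\<bar>)"
    using summable_comparison_test'[of g 0 "\<lambda>k. \<bar>e k * x ^ k\<bar>"] le_g g_sums
    by (auto simp: sums_iff)
  then show "summable (\<lambda>k. e k * x ^ k)" by (rule summable_rabs_cancel)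
  have "\<bar>(1 - x) * (\<Sum>k. e k * x ^ k)\<bar> = (1 - x) * \<bar>\<Sum>k. e k * x ^ k\<bar>"
    using x by (simp add: abs_mult)
  also have "\<dots> \<le> (1 - x) * (\<Sum>k. \<bar>e k * x ^ k\<bar>)"
    using summable_rabs[OF abs_summable] x by (intro mult_left_mono) auto
  also have "\<dots> \<le> (1 - x) * (B * N + \<epsilon> * (1 / (1 - x)))"
    using sums_le[OF le_g summable_sums[OF abs_summable] g_sums] x by (intro mult_left_mono) auto
  also have "\<dots> = (1 - x) * (B * N) + \<epsilon>"
    using x by (simp add: field_simps)
  finally show "\<bar>(1 - x) * (\<Sum>k. e k * x ^ k)\<bar> \<le> (1 - x) * (B * N) + \<epsilon>" .
qed

lemma abel_convergent_null:
  fixes e :: "nat \<Rightarrow> real"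
  assumes e: "e \<longlonglongrightarrow> 0"
  shows "abel_convergent e 0"
proof -
  obtain B where B: "\<And>k. \<bar>e k\<bar> \<le> B"
    using convergent_imp_Bseq[OF convergentI[OF e]] by (auto simp: Bseq_def)
  have tail: "\<exists>N. \<forall>k\<ge>N. \<bar>e k\<bar> \<le> \<epsilon>" if "\<epsilon> > 0" for \<epsilon>
    using e that unfolding LIMSEQ_iff by (metis less_imp_le real_norm_def diff_zero)
  have summable: "summable (\<lambda>k. e k * x ^ k)" if "0 \<le> x" "x < 1" for x
    using abel_mean_abs_le(1)[of 0 e B B] B that by blast
  have "((\<lambda>x. (1 - x) * (\<Sum>k. e k * x ^ k)) \<longlongrightarrow> 0) (at_left 1)"
  proof (rule tendstoI)
    fix \<epsilon> :: real assume "\<epsilon> > 0"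
    then obtain N where N: "\<forall>k\<ge>N. \<bar>e k\<bar> \<le> \<epsilon> / 2" using tail[of "\<epsilon> / 2"] by auto
    have "((\<lambda>x. (1 - x) * (B * N)) \<longlongrightarrow> (1 - 1) * (B * N)) (at_left (1::real))"
      by (intro tendsto_intros)
    then have "\<forall>\<^sub>F x in at_left 1. (1 - x) * (B * N) < \<epsilon> / 2"
      using \<open>\<epsilon> > 0\<close> by (intro order_tendstoD(2)) auto
    then show "\<forall>\<^sub>F x in at_left 1. dist ((1 - x) * (\<Sum>k. e k * x ^ k)) 0 < \<epsilon>"
      using eventually_at_left_real[OF zero_less_one]
    proof eventually_elim
      case (elim x)
      then show ?case
        using abel_mean_abs_le(2)[of N e B "\<epsilon> / 2" x] B N by (auto simp: dist_real_def)
    qed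
  qed
  with summable show ?thesis unfolding abel_convergent_def by blast
qed

lemma abel_convergent_LIMSEQ:
  fixes p :: "nat \<Rightarrow> real"
  assumes "p \<longlonglongrightarrow> l"
  shows "abel_convergent p l"
proof -
  define e where "e k = p k - l" for k
  have "e \<longlonglongrightarrow> 0"
    using assms unfolding e_def by (simp add: LIM_zero)
  then have e: "abel_convergent e 0" by (rule abel_convergent_null)
  have p_sums: "(\<lambda>k. p k * x ^ k) sums (l / (1 - x) + (\<Sum>k. e k * x ^ k))"
    if "0 \<le> x" "x < 1" for x :: real
  proof -
    have "(\<lambda>k. l * x ^ k + e k * x ^ k) sums (l * (1 / (1 - x)) + (\<Sum>k. e k * x ^ k))"
      using that e unfolding abel_convergent_def
      by (intro sums_add sums_mult geometric_sums summable_sums) auto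
    then show ?thesis by (simp add: e_def algebra_simps)
  qed
  have "((\<lambda>x. l + (1 - x) * (\<Sum>k. e k * x ^ k)) \<longlongrightarrow> l + 0) (at_left 1)"
    using e unfolding abel_convergent_def by (intro tendsto_intros) auto
  then have "((\<lambda>x. l + (1 - x) * (\<Sum>k. e k * x ^ k)) \<longlongrightarrow> l) (at_left 1)"
    by simp
  moreover have "\<forall>\<^sub>F x in at_left (1::real).
      l + (1 - x) * (\<Sum>k. e k * x ^ k) = (1 - x) * (\<Sum>k. p k * x ^ k)"
    using eventually_at_left_real[OF zero_less_one]
  proof eventually_elim
    case (elim x)
    then show ?case using sums_unique[OF p_sums[of x]] by (simp add: field_simps)
  qed
  ultimately have "((\<lambda>x. (1 - x) * (\<Sum>k. p k * x ^ k)) \<longlongrightarrow> l) (at_left 1)"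
    by (rule Lim_transform_eventually)
  with p_sums show ?thesis unfolding abel_convergent_def using sums_summable by blast
qed

lemma abel_convergent_alternating:
  "abel_convergent (\<lambda>k. if even k then a else b) ((a + b) / 2)"
proof -
  have alt_sums: "(\<lambda>k. (if even k then a else b) * x ^ k)
      sums ((a + b) / 2 * (1 / (1 - x)) + (a - b) / 2 * (1 / (1 - - x)))"
    if "0 \<le> x" "x < 1" for x :: real
  proof -
    have "(\<lambda>k. (a + b) / 2 * x ^ k + (a - b) / 2 * (- x) ^ k)
        sums ((a + b) / 2 * (1 / (1 - x)) + (a - b) / 2 * (1 / (1 - - x)))"
      using that by (intro sums_add sums_mult geometric_sums) auto
    moreover have "(\<lambda>k. (a + b) / 2 * x ^ k + (a - b) / 2 * (- x) ^ k)
        = (\<lambda>k. (if even k then a else b) * x ^ k)"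
      by (auto simp: fun_eq_iff field_simps)
    ultimately show ?thesis by simp
  qed
  have "((\<lambda>x::real. (a + b) / 2 + (a - b) / 2 * ((1 - x) / (1 + x)))
      \<longlongrightarrow> (a + b) / 2 + (a - b) / 2 * ((1 - 1) / (1 + 1))) (at_left 1)"
    by (intro tendsto_intros) auto
  then have "((\<lambda>x::real. (a + b) / 2 + (a - b) / 2 * ((1 - x) / (1 + x)))
      \<longlongrightarrow> (a + b) / 2) (at_left 1)"
    by simp
  moreover have "\<forall>\<^sub>F x in at_left (1::real). (a + b) / 2 + (a - b) / 2 * ((1 - x) / (1 + x))
      = (1 - x) * (\<Sum>k. (if even k then a else b) * x ^ k)"
    using eventually_at_left_real[OF zero_less_one]
  proof eventually_elim
    case (elim x)
    have cancel: "(1 - x) * (A * (1 / (1 - x)) + C * (1 / (1 - - x))) = A + C * ((1 - x) / (1 + x))"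
      for A C using elim by (simp add: distrib_left)
    have "(\<Sum>k. (if even k then a else b) * x ^ k)
        = (a + b) / 2 * (1 / (1 - x)) + (a - b) / 2 * (1 / (1 - - x))"
      using sums_unique[OF alt_sums[of x]] elim by simp
    then show ?case by (simp only: cancel)
  qed
  ultimately have "((\<lambda>x. (1 - x) * (\<Sum>k. (if even k then a else b) * x ^ k))
      \<longlongrightarrow> (a + b) / 2) (at_left 1)"
    by (rule Lim_transform_eventually)
  with alt_sums show ?thesis unfolding abel_convergent_def using sums_summable by blast
qed

lemma abel_continuous_midpoint:
  assumes "abel_continuous f"
  shows "f ((a + b) / 2) = (f a + f b) / 2"
proof -
  have "abel_convergent (\<lambda>k. f (if even k then a else b)) (f ((a + b) / 2))"
    using assms abel_convergent_alternating[of a b] unfolding abel_continuous_def by blast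
  then have "abel_convergent (\<lambda>k. if even k then f a else f b) (f ((a + b) / 2))"
    by (simp add: if_distrib)
  then show ?thesis
    using abel_convergent_alternating abel_convergent_unique by blast
qed

lemma abel_continuous_LIMSEQ_unique:
  assumes "abel_continuous f" and "r \<longlonglongrightarrow> l" and "(\<lambda>k. f (r k)) \<longlonglongrightarrow> m"
  shows "m = f l"
proof -
  have "abel_convergent (\<lambda>k. f (r k)) (f l)"
    using assms(1) abel_convergent_LIMSEQ[OF assms(2)] unfolding abel_continuous_def by blast
  then show ?thesis
    using abel_convergent_LIMSEQ[OF assms(3)] abel_convergent_unique by blast
qed

lemma midpoint_affine_dyadic:
  fixes f :: "real \<Rightarrow> real"
  assumes J: "\<And>a b. f ((a + b) / 2) = (f a + f b) / 2"
  shows "f (l + d / 2 ^ j) - f l = (f (l + d) - f l) / 2 ^ j"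
proof (induction j)
  case 0
  then show ?case by simp
next
  case (Suc j)
  have "l + d / 2 ^ Suc j = (l + (l + d / 2 ^ j)) / 2" by (simp add: field_simps)
  then have "f (l + d / 2 ^ Suc j) = (f l + f (l + d / 2 ^ j)) / 2" by (metis J)
  then have "f (l + d / 2 ^ Suc j) - f l = (f (l + d / 2 ^ j) - f l) / 2" by simp
  also have "\<dots> = (f (l + d) - f l) / 2 ^ Suc j" using Suc.IH by simp
  finally show ?case .
qed

lemma midpoint_affine_moderate_jump:
  fixes f :: "real \<Rightarrow> real"
  assumes J: "\<And>a b. f ((a + b) / 2) = (f a + f b) / 2"
    and "0 < \<epsilon>" and jump: "\<epsilon> \<le> \<bar>f y - f l\<bar>"
  obtains r where "\<bar>r - l\<bar> \<le> \<bar>y - l\<bar>" "\<epsilon> / 2 \<le> \<bar>f r - f l\<bar>" "\<bar>f r - f l\<bar> \<le> \<epsilon>"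
proof -
  define D where "D = \<bar>f y - f l\<bar>"
  have "\<exists>j. D / 2 ^ j \<le> \<epsilon>"
  proof -
    obtain j where "D / \<epsilon> < 2 ^ j" using real_arch_pow[of 2 "D / \<epsilon>"] by auto
    then show ?thesis using \<open>0 < \<epsilon>\<close> by (auto simp: field_simps intro: less_imp_le)
  qed
  define j where "j = (LEAST j. D / 2 ^ j \<le> \<epsilon>)"
  have upper: "D / 2 ^ j \<le> \<epsilon>"
    unfolding j_def by (rule LeastI_ex) fact
  have lower: "\<epsilon> / 2 \<le> D / 2 ^ j"
  proof (cases j)
    case 0
    then show ?thesis using jump \<open>0 < \<epsilon>\<close> by (simp add: D_def)
  next
    case (Suc i)
    then have "\<not> D / 2 ^ i \<le> \<epsilon>"
      using not_less_Least[of i "\<lambda>j. D / 2 ^ j \<le> \<epsilon>"] unfolding j_def by simp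
    with Suc show ?thesis by (simp add: field_simps)
  qed
  define r where "r = l + (y - l) / 2 ^ j"
  have fr: "\<bar>f r - f l\<bar> = D / 2 ^ j"
    using midpoint_affine_dyadic[OF J, of l "y - l" j] by (simp add: r_def D_def abs_divide)
  show ?thesis
  proof (rule that)
    show "\<bar>r - l\<bar> \<le> \<bar>y - l\<bar>"
      using divide_left_mono[of 1 "2 ^ j" "\<bar>y - l\<bar>"] by (simp add: r_def abs_divide)
    show "\<epsilon> / 2 \<le> \<bar>f r - f l\<bar>" using fr lower by simp
    show "\<bar>f r - f l\<bar> \<le> \<epsilon>" using fr upper by simp
  qed
qed

lemma midpoint_affine_isCont:
  fixes f :: "real \<Rightarrow> real"
  assumes J: "\<And>a b. f ((a + b) / 2) = (f a + f b) / 2"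
    and limits: "\<And>r m. r \<longlonglongrightarrow> l \<Longrightarrow> (\<lambda>k. f (r k)) \<longlonglongrightarrow> m \<Longrightarrow> m = f l"
  shows "isCont f l"
  unfolding continuous_at_eps_delta dist_real_def
proof (rule ccontr)
  assume "\<not> (\<forall>e>0. \<exists>d>0. \<forall>y. \<bar>y - l\<bar> < d \<longrightarrow> \<bar>f y - f l\<bar> < e)"
  then obtain \<epsilon> where "0 < \<epsilon>" and far: "\<And>d. 0 < d \<Longrightarrow> \<exists>y. \<bar>y - l\<bar> < d \<and> \<epsilon> \<le> \<bar>f y - f l\<bar>"
    by (meson not_less)
  text \<open>Halving the distance to l keeps the jumps of f between \<epsilon>/2 and \<epsilon>, so a
    subsequence of the jumps converges to a nonzero limit.\<close>
  have "\<exists>r. \<bar>r - l\<bar> < 1 / Suc n \<and> \<epsilon> / 2 \<le> \<bar>f r - f l\<bar> \<and> \<bar>f r - f l\<bar> \<le> \<epsilon>" for n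
  proof -
    obtain y where "\<bar>y - l\<bar> < 1 / Suc n" and "\<epsilon> \<le> \<bar>f y - f l\<bar>" using far[of "1 / Suc n"] by auto
    from \<open>\<epsilon> \<le> \<bar>f y - f l\<bar>\<close> obtain r where "\<bar>r - l\<bar> \<le> \<bar>y - l\<bar>" "\<epsilon> / 2 \<le> \<bar>f r - f l\<bar>" "\<bar>f r - f l\<bar> \<le> \<epsilon>"
      by (rule midpoint_affine_moderate_jump[OF J \<open>0 < \<epsilon>\<close>])
    with \<open>\<bar>y - l\<bar> < 1 / Suc n\<close> show ?thesis by (meson le_less_trans)
  qed
  then obtain r where "\<forall>n. \<bar>r n - l\<bar> < 1 / Suc n \<and> \<epsilon> / 2 \<le> \<bar>f (r n) - f l\<bar> \<and> \<bar>f (r n) - f l\<bar> \<le> \<epsilon>"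
    using choice[of "\<lambda>n r. \<bar>r - l\<bar> < 1 / Suc n \<and> \<epsilon> / 2 \<le> \<bar>f r - f l\<bar> \<and> \<bar>f r - f l\<bar> \<le> \<epsilon>"]
    by blast
  then have r_near: "\<And>n. \<bar>r n - l\<bar> < 1 / Suc n"
    and r_jump: "\<And>n. \<epsilon> / 2 \<le> \<bar>f (r n) - f l\<bar>" "\<And>n. \<bar>f (r n) - f l\<bar> \<le> \<epsilon>"
    by auto
  have "(\<lambda>n. r n - l) \<longlonglongrightarrow> 0"
    by (rule Lim_null_comparison[OF always_eventually LIMSEQ_inverse_real_of_nat])
      (use r_near in \<open>auto simp: inverse_eq_divide less_imp_le\<close>)
  then have r: "r \<longlonglongrightarrow> l" by (simp add: LIM_zero_iff)
  have "bounded (range (\<lambda>n. f (r n)))"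
    by (rule bounded_subset[OF bounded_cball[of "f l" \<epsilon>]])
      (use r_jump(2) in \<open>auto simp: dist_real_def abs_minus_commute\<close>)
  then obtain \<tau> m where "strict_mono \<tau>" and m: "((\<lambda>n. f (r n)) \<circ> \<tau>) \<longlonglongrightarrow> m"
    using bounded_imp_convergent_subsequence by blast
  have "(\<lambda>n. \<bar>((\<lambda>n. f (r n)) \<circ> \<tau>) n - f l\<bar>) \<longlonglongrightarrow> \<bar>m - f l\<bar>"
    by (intro tendsto_intros m)
  then have "\<epsilon> / 2 \<le> \<bar>m - f l\<bar>"
    by (rule LIMSEQ_le_const) (use r_jump(1) in auto)
  moreover have "m = f l"
    using limits[OF LIMSEQ_subseq_LIMSEQ[OF r \<open>strict_mono \<tau>\<close>]] m by (simp add: o_def)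
  ultimately show False using \<open>0 < \<epsilon>\<close> by simp
qed

lemma midpoint_affine_nonpos_between_zeros:
  fixes g :: "real \<Rightarrow> real"
  assumes J: "\<And>a b. g ((a + b) / 2) = (g a + g b) / 2"
    and cont: "continuous_on {a..b} g" and "a \<le> b" "g a = 0" "g b = 0"
    and "x \<in> {a..b}"
  shows "g x \<le> 0"
proof -
  obtain c where c: "c \<in> {a..b}" and max: "\<And>y. y \<in> {a..b} \<Longrightarrow> g y \<le> g c"
    using continuous_attains_sup[OF compact_Icc _ cont] \<open>a \<le> b\<close> by auto
  define h where "h = min (c - a) (b - c)"
  have "c - h \<in> {a..b}" "c + h \<in> {a..b}" using c by (auto simp: h_def)
  then have "g (c - h) \<le> g c" "g (c + h) \<le> g c" by (auto intro: max)
  moreover have "g c = (g (c - h) + g (c + h)) / 2" using J[of "c - h" "c + h"] by simp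
  ultimately have "g (c - h) = g c" and "g (c + h) = g c" by auto
  moreover have "c - h = a \<or> c + h = b" by (auto simp: h_def min_def)
  ultimately have "g c = 0" using \<open>g a = 0\<close> \<open>g b = 0\<close> by auto
  then show ?thesis using max \<open>x \<in> {a..b}\<close> by auto
qed

lemma midpoint_affine_continuous_imp_affine:
  fixes f :: "real \<Rightarrow> real"
  assumes J: "\<And>a b. f ((a + b) / 2) = (f a + f b) / 2"
    and cont: "\<And>x. isCont f x"
  shows "f x = (f 1 - f 0) * x + f 0"
proof -
  define g where "g y = f y - (f 1 - f 0) * y - f 0" for y
  have Jg: "g ((a + b) / 2) = (g a + g b) / 2" for a b
    unfolding g_def using J[of a b] by (simp add: field_simps)
  have Jmg: "- g ((a + b) / 2) = (- g a + - g b) / 2" for a b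
    using Jg[of a b] by simp
  have "isCont g y" for y unfolding g_def by (intro continuous_intros cont)
  then have cont_g: "continuous_on A g" for A by (simp add: continuous_at_imp_continuous_on)
  then have cont_mg: "continuous_on A (\<lambda>y. - g y)" for A by (rule continuous_on_minus)
  have "g 0 = 0" "g 1 = 0" by (simp_all add: g_def)
  have g_double: "g (2 * t) = 2 * g t" for t using Jg[of 0 "2 * t"] \<open>g 0 = 0\<close> by simp
  have g_minus: "g (- t) = - g t" for t using Jg[of t "- t"] \<open>g 0 = 0\<close> by simp
  have g_pow2: "g (2 ^ k) = 0" for k
    by (induction k) (simp_all add: \<open>g 1 = 0\<close> g_double)
  obtain k where "\<bar>x\<bar> < 2 ^ k" using real_arch_pow[of 2 "\<bar>x\<bar>"] by auto
  then have x: "x \<in> {- (2 ^ k) .. 2 ^ k}" by auto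
  have "g x \<le> 0"
    by (rule midpoint_affine_nonpos_between_zeros[OF Jg cont_g _ _ _ x])
      (simp_all add: g_minus g_pow2)
  moreover have "- g x \<le> 0"
    by (rule midpoint_affine_nonpos_between_zeros[of "\<lambda>y. - g y", OF Jmg cont_mg _ _ _ x])
      (simp_all add: g_minus g_pow2)
  ultimately show ?thesis by (simp add: g_def)
qed

lemma G_continuous_affine:
  assumes "seq_method cG G" and "regular_method cG G"
  shows "G_continuous cG G (\<lambda>x. \<alpha> * x + \<beta>)"
  unfolding G_continuous_def
proof
  fix p assume "p \<in> cG"
  have "(\<lambda>n. \<beta>) \<in> cG" "G (\<lambda>n. \<beta>) = \<beta>"
    using assms(2) convergent_const[of \<beta>] unfolding regular_method_def by simp_all
  moreover have "(\<lambda>n. \<alpha> * p n) \<in> cG" "G (\<lambda>n. \<alpha> * p n) = \<alpha> * G p"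
    using assms(1) \<open>p \<in> cG\<close> unfolding seq_method_def by auto
  ultimately show "(\<lambda>n. \<alpha> * p n + \<beta>) \<in> cG \<and> G (\<lambda>n. \<alpha> * p n + \<beta>) = \<alpha> * G p + \<beta>"
    using assms(1) unfolding seq_method_def by simp
qed

theorem corollary5:
  fixes cG :: "(nat \<Rightarrow> real) set" and G :: "(nat \<Rightarrow> real) \<Rightarrow> real" and f :: "real \<Rightarrow> real"
  assumes "seq_method cG G"
    and "regular_method cG G"
    and "subsequential_method cG G"
    and "abel_continuous f"
  shows "G_continuous cG G f"
proof -
  have J: "\<And>a b. f ((a + b) / 2) = (f a + f b) / 2"
    using abel_continuous_midpoint[OF assms(4)] .
  have "isCont f x" for x
    using midpoint_affine_isCont[OF J abel_continuous_LIMSEQ_unique[OF assms(4)]] .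
  then have affine: "f = (\<lambda>x. (f 1 - f 0) * x + f 0)"
    by (intro ext midpoint_affine_continuous_imp_affine[OF J])
  show ?thesis
    by (subst affine) (rule G_continuous_affine[OF assms(1,2)])
qed

end
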